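(* Let $X$ be a topological quandle and let $\{X_\alpha\}$ be the decomposition of $X$ into its path components, such that each $X_\alpha$ is indecomposable. Then $H_0(X)\cong\bigoplus_\alpha\mathbb{Z}$, with one copy of $\mathbb{Z}$ for each path component.
   Context: A quandle is a set with a binary operation $\triangleright$ such that $x\triangleright x=x$, each $\beta_y(x)=x\triangleright y$ is bijective, and $(x\triangleright y)\triangleright z=(x\triangleright z)\triangleright(y\triangleright z)$; write $x\triangleright^{-1}y=\beta_y^{-1}(x)$. A topological quandle is a topological space with a continuous quandle operation such that every $\beta_y$ is a homeomorphism. A path component $X_\alpha$ is called indecomposable if for every $x,y\in X_\alpha$ there exist $y_1,\dots,y_n\in X_\alpha$ and $e_1,\dots,e_n\in\{-1,1\}$ with $x=(\cdots((y\triangleright^{e_1}y_1)\triangleright^{e_2}y_2)\cdots)\triangleright^{e_n}y_n$. $C_0(X)$ is the free abelian group on points of $X$ (constant 0-simplices $\sigma_x$), $C_1(X)$ the free abelian group on paths $\sigma:[0,1]\to X$; for a path $\sigma_{[a,b]}$ from $a$ to $b$, $\partial_1\sigma_{[a,b]}=\sigma_a-\sigma_{a\triangleright b}$. $H_0(X)=C_0(X)/\partial_1(C_1(X))$. *)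

theory Defs
  imports "HOL-Analysis.Analysis" "HOL-Algebra.Free_Abelian_Groups"
begin

definition quandle_on :: "'a set \<Rightarrow> ('a \<Rightarrow> 'a \<Rightarrow> 'a) \<Rightarrow> bool" where
  "quandle_on S q \<longleftrightarrow>
     (\<forall>x\<in>S. \<forall>y\<in>S. q x y \<in> S) \<and>
     (\<forall>x\<in>S. q x x = x) \<and>
     (\<forall>y\<in>S. bij_betw (\<lambda>x. q x y) S S) \<and>
     (\<forall>x\<in>S. \<forall>y\<in>S. \<forall>z\<in>S. q (q x y) z = q (q x z) (q y z))"

definition topological_quandle :: "'a topology \<Rightarrow> ('a \<Rightarrow> 'a \<Rightarrow> 'a) \<Rightarrow> bool" where
  "topological_quandle X q \<longleftrightarrow>
     quandle_on (topspace X) q \<and>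
     continuous_map (prod_topology X X) X (\<lambda>(x, y). q x y) \<and>
     (\<forall>y\<in>topspace X. homeomorphic_map X X (\<lambda>x. q x y))"

text \<open>x \<triangleright>^e y, with e = True meaning exponent 1 and e = False meaning exponent -1.\<close>
definition qact :: "'a set \<Rightarrow> ('a \<Rightarrow> 'a \<Rightarrow> 'a) \<Rightarrow> bool \<Rightarrow> 'a \<Rightarrow> 'a \<Rightarrow> 'a" where
  "qact S q e x y = (if e then q x y else inv_into S (\<lambda>z. q z y) x)"

definition qiter :: "'a set \<Rightarrow> ('a \<Rightarrow> 'a \<Rightarrow> 'a) \<Rightarrow> 'a \<Rightarrow> ('a \<times> bool) list \<Rightarrow> 'a" where
  "qiter S q y ys = foldl (\<lambda>a (z, e). qact S q e a z) y ys"

definition indecomposable_component ::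
    "'a set \<Rightarrow> ('a \<Rightarrow> 'a \<Rightarrow> 'a) \<Rightarrow> 'a set \<Rightarrow> bool" where
  "indecomposable_component S q C \<longleftrightarrow>
     (\<forall>x\<in>C. \<forall>y\<in>C. \<exists>ys. set (map fst ys) \<subseteq> C \<and> x = qiter S q y ys)"

definition C0 :: "'a topology \<Rightarrow> ('a \<Rightarrow>\<^sub>0 int) monoid" where
  "C0 X = free_Abelian_group (topspace X)"

definition C1 :: "'a topology \<Rightarrow> ((real \<Rightarrow> 'a) \<Rightarrow>\<^sub>0 int) monoid" where
  "C1 X = free_Abelian_group {g. pathin X g}"

definition bd1 :: "('a \<Rightarrow> 'a \<Rightarrow> 'a) \<Rightarrow> ((real \<Rightarrow> 'a) \<Rightarrow>\<^sub>0 int) \<Rightarrow> ('a \<Rightarrow>\<^sub>0 int)" where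
  "bd1 q c = frag_extend (\<lambda>g. frag_of (g 0) - frag_of (q (g 0) (g 1))) c"

definition H0 :: "'a topology \<Rightarrow> ('a \<Rightarrow> 'a \<Rightarrow> 'a) \<Rightarrow> ('a \<Rightarrow>\<^sub>0 int) set monoid" where
  "H0 X q = C0 X Mod (bd1 q ` carrier (C1 X))"

end

theory Submission
  imports Defs
begin

text \<open>Sending a point to its path component induces a surjection from \<open>C\<^sub>0(X)\<close> onto the free
  abelian group on the path components; the point is that its kernel is \<open>\<partial>\<^sub>1(C\<^sub>1(X))\<close>.
  For \<open>z \<in> X\<close> the map \<open>x \<mapsto> x \<triangleright>\<^sup>\<plusminus>\<^sup>1 z\<close> is a homeomorphism fixing \<open>z\<close>, so applied to a path
  from \<open>w\<close> to \<open>z\<close> it shows that \<open>w \<triangleright>\<^sup>\<plusminus>\<^sup>1 z\<close> lies in the path component of \<open>w\<close>; hence every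
  boundary \<open>\<sigma>\<^sub>a - \<sigma>\<^bsub>a \<triangleright> b\<^esub>\<close> is in the kernel. Conversely, a path from \<open>w\<close> (resp. from
  \<open>w \<triangleright>\<^sup>-\<^sup>1 z\<close>) to \<open>z\<close> has boundary \<open>\<mp>(\<sigma>\<^bsub>w \<triangleright>\<^sup>\<plusminus>\<^sup>1 z\<^esub> - \<sigma>\<^sub>w)\<close>, and indecomposability
  reaches any \<open>x\<close> in the component of \<open>y\<close> from \<open>y\<close> by such steps inside that component, so
  \<open>\<sigma>\<^sub>x - \<sigma>\<^sub>y\<close> is a boundary; these differences generate the kernel.\<close>

lemma free_Abelian_subgroup_closed:
  assumes "subgroup N (free_Abelian_group S)"
  shows free_Abelian_subgroup_zero: "0 \<in> N"
    and free_Abelian_subgroup_add: "a \<in> N \<Longrightarrow> b \<in> N \<Longrightarrow> a + b \<in> N"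
    and free_Abelian_subgroup_diff: "a \<in> N \<Longrightarrow> b \<in> N \<Longrightarrow> a - b \<in> N"
proof -
  interpret subgroup N "free_Abelian_group S" by (fact assms)
  show "0 \<in> N" using one_closed by simp
  show add: "a + b \<in> N" if "a \<in> N" "b \<in> N" for a b
    using m_closed that by simp
  show "a - b \<in> N" if "a \<in> N" "b \<in> N"
  proof -
    have "b \<in> carrier (free_Abelian_group S)" using \<open>b \<in> N\<close> subset by blast
    then have "- b \<in> N" using m_inv_closed [OF \<open>b \<in> N\<close>] by simp
    with add \<open>a \<in> N\<close> show ?thesis by (metis diff_conv_add_uminus)
  qed
qed

lemma hom_frag_extend_frag_of:
  assumes "f \<in> S \<rightarrow> T"
  shows "frag_extend (frag_of \<circ> f) \<in> hom (free_Abelian_group S) (free_Abelian_group T)"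
proof (rule homI)
  fix c assume "c \<in> carrier (free_Abelian_group S)"
  then show "frag_extend (frag_of \<circ> f) c \<in> carrier (free_Abelian_group T)"
    using keys_frag_extend [of "frag_of \<circ> f" c] assms by auto
qed (simp add: frag_extend_add)

text \<open>The hypotheses on \<open>N\<close> say that it is the subgroup generated by the differences
  \<open>frag_of x - frag_of y\<close> with \<open>f x = f y\<close>.\<close>

lemma free_Abelian_group_Mod_iso:
  assumes image: "f ` S = T"
    and N: "subgroup N (free_Abelian_group S)"
    and N_killed: "\<And>c. c \<in> N \<Longrightarrow> frag_extend (frag_of \<circ> f) c = 0"
    and diff_in_N: "\<And>x y. \<lbrakk>x \<in> S; y \<in> S; f x = f y\<rbrakk> \<Longrightarrow> frag_of x - frag_of y \<in> N"
  shows "free_Abelian_group S Mod N \<cong> free_Abelian_group T"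
proof -
  let ?FS = "free_Abelian_group S" and ?FT = "free_Abelian_group T"
  let ?\<phi> = "frag_extend (frag_of \<circ> f)" and ?\<psi> = "frag_extend (frag_of \<circ> inv_into S f)"
  have \<phi>: "?\<phi> \<in> hom ?FS ?FT"
    using image by (intro hom_frag_extend_frag_of) auto
  have \<psi>: "?\<psi> \<in> hom ?FT ?FS"
    using image by (intro hom_frag_extend_frag_of) (auto intro: inv_into_into)
  have \<phi>\<psi>: "?\<phi> (?\<psi> d) = d" if "d \<in> carrier ?FT" for d
  proof -
    have "?\<phi> (?\<psi> d) = frag_extend ((frag_of \<circ> f) \<circ> inv_into S f) d"
      by (rule frag_extend_compose)
    also have "\<dots> = frag_extend frag_of d"
      using that image by (intro frag_extend_eq) (auto simp: f_inv_into_f)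
    finally show ?thesis by (simp flip: frag_expansion)
  qed
  have hom: "group_hom ?FS ?FT ?\<phi>"
    using \<phi> by (simp add: group_hom_def group_hom_axioms_def)
  have onto: "?\<phi> ` carrier ?FS = carrier ?FT"
  proof
    show "?\<phi> ` carrier ?FS \<subseteq> carrier ?FT" using \<phi> by (auto simp: hom_def)
    show "carrier ?FT \<subseteq> ?\<phi> ` carrier ?FS"
    proof
      fix d assume "d \<in> carrier ?FT"
      then show "d \<in> ?\<phi> ` carrier ?FS"
        using \<phi>\<psi> hom_in_carrier [OF \<psi>] by (metis image_eqI)
    qed
  qed
  have kernel: "kernel ?FS ?FT ?\<phi> = N"
  proof
    show "N \<subseteq> kernel ?FS ?FT ?\<phi>"
      using N_killed subgroup.subset [OF N] by (simp add: kernel_def subset_iff)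
    show "kernel ?FS ?FT ?\<phi> \<subseteq> N"
    proof
      fix c assume "c \<in> kernel ?FS ?FT ?\<phi>"
      then have c: "Poly_Mapping.keys c \<subseteq> S" "?\<phi> c = 0" by (auto simp: kernel_def)
      from c(1) have "c - ?\<psi> (?\<phi> c) \<in> N"
      proof (induction c rule: frag_induction)
        case zero
        show ?case using free_Abelian_subgroup_zero [OF N] by simp
      next
        case (one x)
        have "inv_into S f (f x) \<in> S" "f (inv_into S f (f x)) = f x"
          using one by (auto intro: inv_into_into f_inv_into_f)
        with one show ?case by (simp add: diff_in_N)
      next
        case (diff a b)
        then show ?case
          using free_Abelian_subgroup_diff [OF N diff.IH]
          by (simp add: frag_extend_diff algebra_simps)
      qed
      with c(2) show "c \<in> N" by simp
    qed
  qed
  show ?thesis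
    using group_hom.FactGroup_iso [OF hom onto] unfolding kernel .
qed

lemma topological_quandle_imp_quandle_on:
  "topological_quandle X q \<Longrightarrow> quandle_on (topspace X) q"
  by (simp add: topological_quandle_def)

definition boundaries :: "'a topology \<Rightarrow> ('a \<Rightarrow> 'a \<Rightarrow> 'a) \<Rightarrow> ('a \<Rightarrow>\<^sub>0 int) set" where
  "boundaries X q = bd1 q ` carrier (C1 X)"

lemma bd1_frag_of: "bd1 q (frag_of g) = frag_of (g 0) - frag_of (q (g 0) (g 1))"
  by (simp add: bd1_def)

lemma pathin_endpoints_in_topspace: "pathin X g \<Longrightarrow> g 0 \<in> topspace X \<and> g 1 \<in> topspace X"
  by (auto simp: pathin_def continuous_map_def)

lemma bd1_hom:
  assumes "quandle_on (topspace X) q"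
  shows "bd1 q \<in> hom (C1 X) (C0 X)"
proof (rule homI)
  fix c assume "c \<in> carrier (C1 X)"
  then have "Poly_Mapping.keys c \<subseteq> {g. pathin X g}" by (simp add: C1_def)
  then show "bd1 q c \<in> carrier (C0 X)"
  proof (induction c rule: frag_induction)
    case (one g)
    then have "g 0 \<in> topspace X" "q (g 0) (g 1) \<in> topspace X"
      using assms pathin_endpoints_in_topspace [of X g] by (auto simp: quandle_on_def)
    then show ?case
      using keys_diff [of "frag_of (g 0)" "frag_of (q (g 0) (g 1))"]
      by (auto simp: C0_def bd1_frag_of)
  next
    case (diff a b)
    then show ?case
      using keys_diff [of "bd1 q a" "bd1 q b"] by (auto simp: C0_def bd1_def frag_extend_diff)
  qed (simp add: C0_def bd1_def)
qed (simp add: C1_def C0_def bd1_def frag_extend_add)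

lemma subgroup_boundaries:
  assumes "quandle_on (topspace X) q"
  shows "subgroup (boundaries X q) (free_Abelian_group (topspace X))"
proof -
  have "group_hom (C1 X) (C0 X) (bd1 q)"
    using bd1_hom [OF assms] by (simp add: group_hom_def group_hom_axioms_def C0_def C1_def)
  then show ?thesis
    unfolding boundaries_def by (metis C0_def group_hom.img_is_subgroup)
qed

lemma frag_of_diff_q_in_boundaries:
  assumes "path_component_of X u z"
  shows "frag_of u - frag_of (q u z) \<in> boundaries X q"
proof -
  obtain g where g: "pathin X g" "g 0 = u" "g 1 = z"
    using assms by (auto simp: path_component_of_def)
  then have "frag_of g \<in> carrier (C1 X)" by (simp add: C1_def)
  with g show ?thesis unfolding boundaries_def by (metis bd1_frag_of image_eqI)
qed

lemma qact_self:
  assumes "quandle_on S q" "z \<in> S"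
  shows "qact S q e z z = z"
proof -
  have "q z z = z" "inj_on (\<lambda>x. q x z) S"
    using assms by (auto simp: quandle_on_def bij_betw_def)
  then show ?thesis using assms(2) by (simp add: qact_def inv_into_f_eq)
qed

lemma qact_inverse:
  assumes "quandle_on S q" "w \<in> S" "z \<in> S"
  shows "qact S q False w z \<in> S" "q (qact S q False w z) z = w"
proof -
  have "bij_betw (\<lambda>x. q x z) S S" using assms by (simp add: quandle_on_def)
  then have "w \<in> (\<lambda>x. q x z) ` S" using assms(2) by (simp add: bij_betw_def)
  from inv_into_into [OF this] f_inv_into_f [OF this]
  show "qact S q False w z \<in> S" "q (qact S q False w z) z = w"
    by (simp_all add: qact_def)
qed

lemma continuous_map_qact:
  assumes "topological_quandle X q" "z \<in> topspace X"
  shows "continuous_map X X (\<lambda>x. qact (topspace X) q e x z)"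
proof -
  have "homeomorphic_map X X (\<lambda>x. q x z)"
    using assms by (simp add: topological_quandle_def)
  then obtain g where g: "homeomorphic_maps X X (\<lambda>x. q x z) g"
    by (auto simp: homeomorphic_map_maps)
  have inj: "inj_on (\<lambda>x. q x z) (topspace X)"
    using assms by (simp add: topological_quandle_def quandle_on_def bij_betw_def)
  have "inv_into (topspace X) (\<lambda>x. q x z) y = g y" if "y \<in> topspace X" for y
  proof (rule inv_into_f_eq [OF inj])
    show "g y \<in> topspace X" "q (g y) z = y"
      using g that continuous_map_funspace [of X X g] by (auto simp: homeomorphic_maps_def)
  qed
  then show ?thesis
    using g continuous_map_eq [of X X g] by (cases e) (auto simp: qact_def homeomorphic_maps_def)
qed

lemma path_component_of_qact:
  assumes "topological_quandle X q" "path_component_of X w z"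
  shows "path_component_of X w (qact (topspace X) q e w z)"
proof -
  have S: "quandle_on (topspace X) q" "z \<in> topspace X"
    using topological_quandle_imp_quandle_on [OF assms(1)] path_component_in_topspace [OF assms(2)]
    by auto
  have "path_component_of X (qact (topspace X) q e w z) (qact (topspace X) q e z z)"
    by (rule path_component_of_continuous_image [OF continuous_map_qact [OF assms(1) S(2)] assms(2)])
  then have "path_component_of X (qact (topspace X) q e w z) z"
    by (simp add: qact_self [OF S])
  then show ?thesis
    using assms(2) by (meson path_component_of_sym path_component_of_trans)
qed

lemma qact_diff_in_boundaries:
  assumes tq: "topological_quandle X q" and wz: "path_component_of X w z"
  shows "frag_of (qact (topspace X) q e w z) - frag_of w \<in> boundaries X q"
proof -
  note qo = topological_quandle_imp_quandle_on [OF tq]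
  note B = subgroup_boundaries [OF qo]
  show ?thesis
  proof (cases e)
    case True
    have "0 - (frag_of w - frag_of (q w z)) \<in> boundaries X q"
      by (intro free_Abelian_subgroup_diff [OF B] free_Abelian_subgroup_zero [OF B]
          frag_of_diff_q_in_boundaries wz)
    with True show ?thesis by (simp add: qact_def)
  next
    case False
    let ?u = "qact (topspace X) q False w z"
    have "q ?u z = w"
      using qact_inverse [OF qo] path_component_in_topspace [OF wz] by blast
    moreover have "path_component_of X ?u z"
      using path_component_of_qact [OF tq wz] wz
      by (meson path_component_of_sym path_component_of_trans)
    then have "frag_of ?u - frag_of (q ?u z) \<in> boundaries X q"
      by (rule frag_of_diff_q_in_boundaries)
    ultimately show ?thesis using False by simp
  qed
qed

lemma qiter_snoc: "qiter S q y (ys @ [(z, e)]) = qact S q e (qiter S q y ys) z"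
  by (simp add: qiter_def)

lemma path_component_of_qiter:
  assumes "topological_quandle X q" "y \<in> topspace X"
    and "set (map fst ys) \<subseteq> path_component_of_set X y"
  shows "path_component_of X y (qiter (topspace X) q y ys)"
  using assms(3)
proof (induction ys rule: rev_induct)
  case Nil
  then show ?case using assms(2) by (simp add: qiter_def path_component_of_refl)
next
  case (snoc p ys)
  obtain z e where p: "p = (z, e)" by fastforce
  let ?w = "qiter (topspace X) q y ys"
  have "path_component_of X ?w z"
    using snoc p by (auto intro: path_component_of_trans path_component_of_sym)
  with snoc show ?case
    by (auto simp: p qiter_snoc intro: path_component_of_trans path_component_of_qact [OF assms(1)])
qed

lemma qiter_diff_in_boundaries:
  assumes tq: "topological_quandle X q" and y: "y \<in> topspace X"
    and "set (map fst ys) \<subseteq> path_component_of_set X y"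
  shows "frag_of (qiter (topspace X) q y ys) - frag_of y \<in> boundaries X q"
proof -
  note B = subgroup_boundaries [OF topological_quandle_imp_quandle_on [OF tq]]
  show ?thesis
    using assms(3)
  proof (induction ys rule: rev_induct)
    case Nil
    show ?case by (simp add: qiter_def free_Abelian_subgroup_zero [OF B])
  next
    case (snoc p ys)
    obtain z e where p: "p = (z, e)" by fastforce
    let ?w = "qiter (topspace X) q y ys"
    have "path_component_of X ?w z"
      using snoc p path_component_of_qiter [OF tq y, of ys]
      by (auto intro: path_component_of_trans path_component_of_sym)
    then have "frag_of (qact (topspace X) q e ?w z) - frag_of ?w \<in> boundaries X q"
      by (rule qact_diff_in_boundaries [OF tq])
    moreover have "frag_of ?w - frag_of y \<in> boundaries X q"
      using snoc by simp
    ultimately have "(frag_of (qact (topspace X) q e ?w z) - frag_of ?w) + (frag_of ?w - frag_of y)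
        \<in> boundaries X q"
      by (rule free_Abelian_subgroup_add [OF B])
    then show ?case by (simp add: p qiter_snoc)
  qed
qed

lemma frag_of_diff_in_boundaries:
  assumes tq: "topological_quandle X q"
    and ind: "\<forall>C\<in>path_components_of X. indecomposable_component (topspace X) q C"
    and xy: "path_component_of X x y"
  shows "frag_of x - frag_of y \<in> boundaries X q"
proof -
  have y: "y \<in> topspace X" using path_component_in_topspace [OF xy] by blast
  then have "indecomposable_component (topspace X) q (path_component_of_set X y)"
    using ind by (simp add: path_components_of_def)
  moreover have "x \<in> path_component_of_set X y" "y \<in> path_component_of_set X y"
    using xy y by (auto simp: path_component_of_sym path_component_of_refl)
  ultimately obtain ys where "set (map fst ys) \<subseteq> path_component_of_set X y"
      and "x = qiter (topspace X) q y ys"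
    unfolding indecomposable_component_def by blast
  then show ?thesis using qiter_diff_in_boundaries [OF tq y] by blast
qed

lemma frag_extend_path_component_boundary_eq_0:
  assumes tq: "topological_quandle X q" and "c \<in> boundaries X q"
  shows "frag_extend (frag_of \<circ> path_component_of_set X) c = 0"
proof -
  obtain d where d: "Poly_Mapping.keys d \<subseteq> {g. pathin X g}" "c = bd1 q d"
    using assms(2) by (auto simp: boundaries_def C1_def)
  from d(1) have "frag_extend (frag_of \<circ> path_component_of_set X) (bd1 q d) = 0"
  proof (induction d rule: frag_induction)
    case (one g)
    then have "path_component_of X (g 0) (g 1)"
      by (auto simp: path_component_of_def)
    then have "path_component_of X (g 0) (q (g 0) (g 1))"
      using path_component_of_qact [OF tq, of "g 0" "g 1" True] by (simp add: qact_def)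
    then have "path_component_of_set X (q (g 0) (g 1)) = path_component_of_set X (g 0)"
      by (metis path_component_of_equiv)
    then show ?case by (simp add: bd1_frag_of frag_extend_diff)
  qed (simp_all add: bd1_def frag_extend_diff)
  with d(2) show ?thesis by simp
qed

theorem mainTheorem7:
  fixes X :: "'a topology" and q :: "'a \<Rightarrow> 'a \<Rightarrow> 'a"
  assumes "topological_quandle X q"
    and "\<forall>C\<in>path_components_of X. indecomposable_component (topspace X) q C"
  shows "H0 X q \<cong> free_Abelian_group (path_components_of X)"
  unfolding H0_def C0_def boundaries_def [symmetric]
proof (rule free_Abelian_group_Mod_iso)
  show "path_component_of_set X ` topspace X = path_components_of X"
    by (simp add: path_components_of_def)
  show "subgroup (boundaries X q) (free_Abelian_group (topspace X))"
    by (rule subgroup_boundaries [OF topological_quandle_imp_quandle_on [OF assms(1)]])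
  show "frag_extend (frag_of \<circ> path_component_of_set X) c = 0" if "c \<in> boundaries X q" for c
    using frag_extend_path_component_boundary_eq_0 [OF assms(1) that] .
  show "frag_of x - frag_of y \<in> boundaries X q"
    if "x \<in> topspace X" "y \<in> topspace X" "path_component_of_set X x = path_component_of_set X y" for x y
  proof (rule frag_of_diff_in_boundaries [OF assms])
    have "y \<in> path_component_of_set X y" using that(2) by (simp add: path_component_of_refl)
    then have "y \<in> path_component_of_set X x" by (simp only: that(3))
    then show "path_component_of X x y" by simp
  qed
qed

end
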